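(* For every integer $\ell$ with $\mu_q(n)\le\ell<n$, one has $|\Omega_\ell|<n^{\ell/\mu_q(n)}$.
   Context: Let $q$ be a prime power, $\mathbb{F}=\mathbb{F}_{q^2}$, $G$ a finite abelian group of odd order $n$ with $\gcd(n,q)=1$, and $\mathbb{F}G$ its group algebra. Let $\tau:\mathbb{F}G\to\mathbb{F}G$, $\sum_g\alpha_g g\mapsto\sum_g\alpha_g^q g^{-1}$. Let $e_0=\frac1n\sum_g g$. The primitive idempotents are $e_0$; $e_1,\dots,e_r$ ($\neq e_0$, fixed by $\tau$); and $e_{r+1},\tau(e_{r+1}),\dots,e_{r+s},\tau(e_{r+s})$ (not fixed by $\tau$). Put $\widehat{e}_{r+j}=e_{r+j}+\tau(e_{r+j})$ and $\widehat{E}^\dagger=\{e_1,\dots,e_r,\widehat{e}_{r+1},\dots,\widehat{e}_{r+s}\}$. Let $\mu_q(n)=\min\{\dim_{\mathbb{F}}\mathbb{F}Ge: e\text{ primitive idempotent},\ e\neq e_0\}$. For an integer $\ell$, $\Omega_\ell$ is the set of subspaces $J=\bigoplus_{e\in S}\mathbb{F}Ge$ of $\mathbb{F}G$ with $S\subseteq\widehat{E}^\dagger$ and $\dim_{\mathbb{F}}J=\ell$. *)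

theory Defs
  imports Complex_Main "HOL-Library.Function_Algebras" "HOL-Computational_Algebra.Primes"
begin

text \<open>The group algebra FG of a finite abelian group G (written additively, as the
  type 'g) over a finite field F (the type 'f) is represented by the functions
  'g \<Rightarrow> 'f (coefficient functions); addition and F-scaling are pointwise and the
  algebra multiplication is convolution.\<close>

definition ga_mult :: "('g::{ab_group_add,finite} \<Rightarrow> 'f::field) \<Rightarrow> ('g \<Rightarrow> 'f) \<Rightarrow> ('g \<Rightarrow> 'f)" where
  "ga_mult a b = (\<lambda>g. \<Sum>h\<in>UNIV. a h * b (g - h))"

definition ga_scale :: "'f::field \<Rightarrow> ('g \<Rightarrow> 'f) \<Rightarrow> ('g \<Rightarrow> 'f)" where
  "ga_scale c a = (\<lambda>g. c * a g)"

text \<open>tau(sum a_g g) = sum a_g^q g^{-1}: the coefficient at g is (a(-g))^q.\<close>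
definition ga_tau :: "nat \<Rightarrow> ('g::{ab_group_add,finite} \<Rightarrow> 'f::field) \<Rightarrow> ('g \<Rightarrow> 'f)" where
  "ga_tau q a = (\<lambda>g. (a (- g)) ^ q)"

definition ga_idempotent :: "('g::{ab_group_add,finite} \<Rightarrow> 'f::field) \<Rightarrow> bool" where
  "ga_idempotent e \<longleftrightarrow> ga_mult e e = e"

definition ga_primitive_idempotent :: "('g::{ab_group_add,finite} \<Rightarrow> 'f::field) \<Rightarrow> bool" where
  "ga_primitive_idempotent e \<longleftrightarrow> e \<noteq> 0 \<and> ga_idempotent e \<and>
     \<not> (\<exists>e1 e2. ga_idempotent e1 \<and> ga_idempotent e2 \<and> e1 \<noteq> 0 \<and> e2 \<noteq> 0 \<and>
            ga_mult e1 e2 = 0 \<and> e = e1 + e2)"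

definition ga_e0 :: "('g::{ab_group_add,finite} \<Rightarrow> 'f::field)" where
  "ga_e0 = (\<lambda>g::'g. inverse (of_nat (card (UNIV :: 'g set))))"

definition ga_ideal :: "('g::{ab_group_add,finite} \<Rightarrow> 'f::field) \<Rightarrow> ('g \<Rightarrow> 'f) set" where
  "ga_ideal e = {ga_mult x e | x. True}"

definition ga_dim :: "('g::{ab_group_add,finite} \<Rightarrow> 'f::field) set \<Rightarrow> nat" where
  "ga_dim J = vector_space.dim (ga_scale :: 'f \<Rightarrow> ('g \<Rightarrow> 'f) \<Rightarrow> ('g \<Rightarrow> 'f)) J"

definition mu_q :: "'g::{ab_group_add,finite} itself \<Rightarrow> 'f::field itself \<Rightarrow> nat" where
  "mu_q tg tf = Min {ga_dim (ga_ideal (e :: 'g \<Rightarrow> 'f)) | e. ga_primitive_idempotent e \<and> e \<noteq> ga_e0}"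

definition Ehat_dagger :: "nat \<Rightarrow> ('g::{ab_group_add,finite} \<Rightarrow> 'f::field) set" where
  "Ehat_dagger q =
     {e. ga_primitive_idempotent e \<and> e \<noteq> ga_e0 \<and> ga_tau q e = e} \<union>
     {e + ga_tau q e | e. ga_primitive_idempotent e \<and> ga_tau q e \<noteq> e}"

definition ga_ideal_sum :: "('g::{ab_group_add,finite} \<Rightarrow> 'f::field) set \<Rightarrow> ('g \<Rightarrow> 'f) set" where
  "ga_ideal_sum S = {\<Sum>e\<in>S. x e | x. \<forall>e\<in>S. x e \<in> ga_ideal e}"

definition Omega :: "nat \<Rightarrow> nat \<Rightarrow> ('g::{ab_group_add,finite} \<Rightarrow> 'f::field) set set" where
  "Omega q l = {J. \<exists>S. S \<subseteq> Ehat_dagger q \<and> J = ga_ideal_sum S \<and> ga_dim J = l}"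

end

(* Each element of Ehat-dagger is an idempotent orthogonal to e_0 whose ideal contains FGe for a
   primitive idempotent e <> e_0, so it has dimension at least mu; distinct elements are orthogonal
   because tau permutes the primitive idempotents and e + tau(e) is the sum over a tau-orbit.
   Dimensions add over orthogonal idempotents, hence n >= dim FGe_0 + mu |Ehat-dagger| > |Ehat-dagger|,
   and every J in Omega_l is the ideal sum over a nonempty S in Ehat-dagger with mu |S| <= l, i.e.
   |S| <= K = floor (l / mu).  Counting such S gives
   |Omega_l| <= sum_{k=1..K} C(n-1, k) <= sum_{k=1..K} C(K, k) (n-1)^k = n^K - 1 < n^(l/mu). *)

theory Submission
  imports Defs "HOL-Number_Theory.Residues"
begin

section \<open>The group algebra and its idempotents\<close>

definition ga_of :: "'g \<Rightarrow> ('g \<Rightarrow> 'f::field)" where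
  "ga_of g = (\<lambda>h. if h = g then 1 else 0)"

interpretation ga_mult: Groups.comm_monoid "ga_mult :: ('g::{ab_group_add,finite} \<Rightarrow> 'f::field) \<Rightarrow> _" "ga_of 0"
proof
  fix a b c :: "'g \<Rightarrow> 'f"
  show "ga_mult (ga_mult a b) c = ga_mult a (ga_mult b c)"
  proof
    fix g
    have "ga_mult (ga_mult a b) c g = (\<Sum>h\<in>UNIV. \<Sum>k\<in>UNIV. a k * b (h - k) * c (g - h))"
      unfolding ga_mult_def by (simp add: sum_distrib_right)
    also have "\<dots> = (\<Sum>k\<in>UNIV. \<Sum>h\<in>UNIV. a k * b (h - k) * c (g - h))"
      by (rule sum.swap)
    also have "\<dots> = (\<Sum>k\<in>UNIV. \<Sum>j\<in>UNIV. a k * b j * c (g - k - j))"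
    proof (rule sum.cong[OF refl])
      fix k
      show "(\<Sum>h\<in>UNIV. a k * b (h - k) * c (g - h)) = (\<Sum>j\<in>UNIV. a k * b j * c (g - k - j))"
        by (rule sum.reindex_bij_witness[where i = "\<lambda>j. j + k" and j = "\<lambda>h. h - k"])
           (auto simp: algebra_simps)
    qed
    also have "\<dots> = ga_mult a (ga_mult b c) g"
      unfolding ga_mult_def by (simp add: sum_distrib_left mult.assoc)
    finally show "ga_mult (ga_mult a b) c g = ga_mult a (ga_mult b c) g" .
  qed
  show "ga_mult a b = ga_mult b a"
  proof
    fix g
    show "ga_mult a b g = ga_mult b a g"
      unfolding ga_mult_def
      by (rule sum.reindex_bij_witness[where i = "\<lambda>h. g - h" and j = "\<lambda>h. g - h"])
         (auto simp: mult.commute)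
  qed
  show "ga_mult a (ga_of 0) = a"
  proof
    fix g
    have "ga_mult a (ga_of 0) g = (\<Sum>h\<in>UNIV. if h = g then a h else 0)"
      unfolding ga_mult_def ga_of_def by (intro sum.cong) auto
    then show "ga_mult a (ga_of 0) g = a g" by simp
  qed
qed

context
  fixes a b c :: "'g::{ab_group_add,finite} \<Rightarrow> 'f::field"
begin

lemma ga_mult_add_left: "ga_mult (a + b) c = ga_mult a c + ga_mult b c"
  by (simp add: ga_mult_def fun_eq_iff distrib_right sum.distrib)

lemma ga_mult_add_right: "ga_mult a (b + c) = ga_mult a b + ga_mult a c"
  by (simp add: ga_mult_def fun_eq_iff distrib_left sum.distrib)

lemma ga_mult_diff_left: "ga_mult (a - b) c = ga_mult a c - ga_mult b c"
  by (simp add: ga_mult_def fun_eq_iff left_diff_distrib sum_subtractf)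

lemma ga_mult_diff_right: "ga_mult a (b - c) = ga_mult a b - ga_mult a c"
  by (simp add: ga_mult_def fun_eq_iff right_diff_distrib sum_subtractf)

lemma ga_mult_zero_left [simp]: "ga_mult 0 a = 0"
  by (simp add: ga_mult_def fun_eq_iff)

lemma ga_mult_zero_right [simp]: "ga_mult a 0 = 0"
  by (simp add: ga_mult_def fun_eq_iff)

lemma ga_mult_scale_left: "ga_mult (ga_scale r a) b = ga_scale r (ga_mult a b)"
  by (simp add: ga_mult_def ga_scale_def fun_eq_iff sum_distrib_left mult.assoc)

lemma ga_mult_scale_right: "ga_mult a (ga_scale r b) = ga_scale r (ga_mult a b)"
  by (simp add: ga_mult_def ga_scale_def fun_eq_iff sum_distrib_left mult.left_commute)

end

lemma ga_mult_sum_left: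
  "ga_mult (\<Sum>i\<in>I. a i) c = (\<Sum>i\<in>I. ga_mult (a i) c :: 'g::{ab_group_add,finite} \<Rightarrow> 'f::field)"
proof (induction I rule: infinite_finite_induct)
  case (insert i I)
  then show ?case by (simp only: sum.insert[OF insert.hyps] ga_mult_add_left insert.IH)
qed (simp_all add: ga_mult_def)

lemma primitive_idempotentD:
  assumes "ga_primitive_idempotent e"
  shows "e \<noteq> 0" "ga_mult e e = e"
  using assms unfolding ga_primitive_idempotent_def ga_idempotent_def by auto

lemma primitive_idempotent_mult_idempotent:
  fixes e f :: "'g::{ab_group_add,finite} \<Rightarrow> 'f::field"
  assumes e: "ga_primitive_idempotent e" and f: "ga_idempotent f"
  shows "ga_mult e f = 0 \<or> ga_mult e f = e"
proof -
  have ee: "ga_mult e e = e" using primitive_idempotentD[OF e] by simp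
  have ff: "ga_mult f f = f" using f unfolding ga_idempotent_def .
  \<comment> \<open>e = ef + (e - ef) is a decomposition into orthogonal idempotents\<close>
  have efe: "ga_mult (ga_mult e f) e = ga_mult e f"
    by (metis ee ga_mult.assoc ga_mult.commute)
  have efef: "ga_mult (ga_mult e f) (ga_mult e f) = ga_mult e f"
    by (metis ee ff ga_mult.assoc ga_mult.left_commute)
  have "ga_idempotent (ga_mult e f)" "ga_idempotent (e - ga_mult e f)"
    "ga_mult (ga_mult e f) (e - ga_mult e f) = 0"
    unfolding ga_idempotent_def
    by (simp_all add: ga_mult_diff_left ga_mult_diff_right ee efe efef)
       (metis ga_mult.commute efe)
  moreover have "e = ga_mult e f + (e - ga_mult e f)" by simp
  ultimately show ?thesis
    using e unfolding ga_primitive_idempotent_def by (metis eq_iff_diff_eq_0)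
qed

lemma primitive_idempotents_orthogonal:
  fixes e f :: "'g::{ab_group_add,finite} \<Rightarrow> 'f::field"
  assumes e: "ga_primitive_idempotent e" and f: "ga_primitive_idempotent f" and "e \<noteq> f"
  shows "ga_mult e f = 0"
proof -
  have "ga_mult e f = 0 \<or> ga_mult e f = e" "ga_mult f e = 0 \<or> ga_mult f e = f"
    using primitive_idempotent_mult_idempotent e f unfolding ga_primitive_idempotent_def by blast+
  then show ?thesis
    using \<open>e \<noteq> f\<close> by (auto simp: ga_mult.commute[of f e])
qed

lemma ga_mult_e0: "ga_mult a (ga_e0 :: 'g::{ab_group_add,finite} \<Rightarrow> 'f::field) = ga_scale (sum a UNIV) ga_e0"
  by (simp add: ga_mult_def ga_e0_def ga_scale_def fun_eq_iff sum_distrib_right)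

context
  assumes order_nonzero: "of_nat (card (UNIV :: 'g::{ab_group_add,finite} set)) \<noteq> (0::'f::field)"
begin

lemma e0_idempotent: "ga_mult ga_e0 ga_e0 = (ga_e0 :: 'g \<Rightarrow> 'f)"
  using order_nonzero by (simp add: ga_mult_def ga_e0_def fun_eq_iff)

lemma e0_nonzero: "(ga_e0 :: 'g \<Rightarrow> 'f) \<noteq> 0"
  using order_nonzero by (simp add: ga_e0_def fun_eq_iff)

lemma e0_primitive: "ga_primitive_idempotent (ga_e0 :: 'g \<Rightarrow> 'f)"
  unfolding ga_primitive_idempotent_def
proof (intro conjI notI)
  show "(ga_e0 :: 'g \<Rightarrow> 'f) = 0 \<Longrightarrow> False"
    using e0_nonzero by simp
  show "ga_idempotent (ga_e0 :: 'g \<Rightarrow> 'f)"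
    using e0_idempotent unfolding ga_idempotent_def .
  assume "\<exists>e1 e2. ga_idempotent e1 \<and> ga_idempotent e2 \<and> e1 \<noteq> 0 \<and> e2 \<noteq> 0 \<and>
    ga_mult e1 e2 = 0 \<and> (ga_e0 :: 'g \<Rightarrow> 'f) = e1 + e2"
  then obtain e1 e2 :: "'g \<Rightarrow> 'f" where idem: "ga_idempotent e1" "ga_idempotent e2"
    and nz: "e1 \<noteq> 0" "e2 \<noteq> 0" and orth: "ga_mult e1 e2 = 0" and sum: "ga_e0 = e1 + e2"
    by blast
  have e1e1: "ga_mult e1 e1 = e1" and e2e2: "ga_mult e2 e2 = e2"
    using idem unfolding ga_idempotent_def by auto
  have "ga_mult e1 ga_e0 = e1" "ga_mult e2 ga_e0 = e2"
    unfolding sum ga_mult_add_right e1e1 e2e2 orth ga_mult.commute[of e2 e1] by simp_all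
  \<comment> \<open>FGe_0 is one-dimensional, so both summands are multiples of e_0\<close>
  then obtain c1 c2 where e1: "e1 = ga_scale c1 ga_e0" and e2: "e2 = ga_scale c2 ga_e0"
    by (metis ga_mult_e0)
  have "ga_mult e1 e2 = ga_scale (c1 * c2) ga_e0"
    unfolding e1 e2 ga_mult_scale_left ga_mult_scale_right e0_idempotent
    by (simp add: ga_scale_def fun_eq_iff)
  then have "c1 * c2 = 0"
    using orth e0_nonzero by (auto simp: ga_scale_def fun_eq_iff)
  then show False
    using nz unfolding e1 e2 by (auto simp: ga_scale_def fun_eq_iff)
qed

end

section \<open>Dimensions of ideals\<close>

lemma sum_fun_apply: "(\<Sum>i\<in>I. f i) x = (\<Sum>i\<in>I. f i x)"
  by (induction I rule: infinite_finite_induct) auto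

interpretation ga: vector_space "ga_scale :: 'f::field \<Rightarrow> ('g \<Rightarrow> 'f) \<Rightarrow> ('g \<Rightarrow> 'f)"
  by unfold_locales (auto simp: ga_scale_def fun_eq_iff algebra_simps)

lemma ga_expansion: "a = (\<Sum>g\<in>UNIV. ga_scale (a g) (ga_of g) :: 'g::finite \<Rightarrow> 'f::field)"
proof
  fix h
  have "(\<Sum>g\<in>UNIV. ga_scale (a g) (ga_of g)) h = (\<Sum>g\<in>UNIV. if g = h then a g else 0)"
    unfolding sum_fun_apply by (intro sum.cong) (auto simp: ga_scale_def ga_of_def)
  then show "a h = (\<Sum>g\<in>UNIV. ga_scale (a g) (ga_of g)) h" by simp
qed

lemma ga_independent_ga_of: "ga.independent (range (ga_of :: 'g::finite \<Rightarrow> ('g \<Rightarrow> 'f::field)))"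
proof (rule ga.independent_if_scalars_zero)
  fix c :: "('g \<Rightarrow> 'f) \<Rightarrow> 'f" and x :: "'g \<Rightarrow> 'f"
  assume sum: "(\<Sum>y\<in>range ga_of. ga_scale (c y) y) = 0" and "x \<in> range ga_of"
  then obtain g where x: "x = ga_of g" by blast
  have "(\<Sum>y\<in>range ga_of. ga_scale (c y) y) g = (\<Sum>y\<in>range ga_of. if y = x then c y else 0)"
    unfolding sum_fun_apply x by (intro sum.cong) (auto simp: ga_scale_def ga_of_def split: if_splits)
  then show "c x = 0" using sum x by simp
qed simp

lemma ga_span_ga_of: "ga.span (range (ga_of :: 'g::finite \<Rightarrow> ('g \<Rightarrow> 'f::field))) = UNIV"
proof -
  have "a \<in> ga.span (range ga_of)" for a :: "'g \<Rightarrow> 'f"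
    by (subst ga_expansion) (intro ga.span_sum ga.span_scale ga.span_base rangeI)
  then show ?thesis by blast
qed

interpretation ga: finite_dimensional_vector_space
  "ga_scale :: 'f::field \<Rightarrow> ('g::finite \<Rightarrow> 'f) \<Rightarrow> ('g \<Rightarrow> 'f)" "range ga_of"
  by unfold_locales (simp_all add: ga_independent_ga_of ga_span_ga_of)

lemma ga_dim_le_card: "ga_dim (A :: ('g::{ab_group_add,finite} \<Rightarrow> 'f::field) set) \<le> card (UNIV :: 'g set)"
proof -
  have "inj (ga_of :: 'g \<Rightarrow> ('g \<Rightarrow> 'f))"
    by (rule injI) (auto simp: ga_of_def fun_eq_iff split: if_splits)
  then show ?thesis
    using ga.dim_subset_UNIV[of A] by (simp add: ga_dim_def ga.dimension_def card_image)
qed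

lemma ga_dim_mono: "A \<subseteq> B \<Longrightarrow> ga_dim A \<le> ga_dim (B :: ('g::{ab_group_add,finite} \<Rightarrow> 'f::field) set)"
  unfolding ga_dim_def by (rule ga.dim_subset)

lemma ga_subspace_ideal: "ga.subspace (ga_ideal (e :: 'g::{ab_group_add,finite} \<Rightarrow> 'f::field))"
  unfolding ga.subspace_def ga_ideal_def
  by (auto simp: ga_mult_add_left[symmetric] ga_mult_scale_left[symmetric] intro: exI[of _ 0])

lemma ga_ideal_idempotent_iff:
  assumes "ga_idempotent e"
  shows "x \<in> ga_ideal e \<longleftrightarrow> ga_mult x e = (x :: 'g::{ab_group_add,finite} \<Rightarrow> 'f::field)"
  using assms unfolding ga_idempotent_def ga_ideal_def by (auto simp: ga_mult.assoc) metis

lemma ga_ideal_subsetI: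
  "ga_mult a e = a \<Longrightarrow> ga_ideal a \<subseteq> ga_ideal (e :: 'g::{ab_group_add,finite} \<Rightarrow> 'f::field)"
  unfolding ga_ideal_def by auto (metis ga_mult.assoc)

lemma ga_dim_ideal_pos:
  assumes "ga_idempotent e" "e \<noteq> 0"
  shows "0 < ga_dim (ga_ideal (e :: 'g::{ab_group_add,finite} \<Rightarrow> 'f::field))"
proof -
  have "e \<in> ga_ideal e" using assms(1) by (simp add: ga_ideal_idempotent_iff ga_idempotent_def)
  then have "\<not> ga_ideal e \<subseteq> {0}" using assms(2) by blast
  then show ?thesis unfolding ga_dim_def using ga.dim_eq_0[of "ga_ideal e"] by linarith
qed

lemma ga_subspace_ideal_sum: "ga.subspace (ga_ideal_sum (S :: ('g::{ab_group_add,finite} \<Rightarrow> 'f::field) set))"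
  unfolding ga.subspace_def ga_ideal_sum_def
proof (intro conjI ballI allI)
  show "0 \<in> {\<Sum>e\<in>S. x e |x. \<forall>e\<in>S. x e \<in> ga_ideal e}"
    using ga.subspace_0[OF ga_subspace_ideal] by (auto intro!: exI[of _ "\<lambda>_. 0"])
next
  fix a b assume "a \<in> {\<Sum>e\<in>S. x e |x. \<forall>e\<in>S. x e \<in> ga_ideal e}" "b \<in> {\<Sum>e\<in>S. x e |x. \<forall>e\<in>S. x e \<in> ga_ideal e}"
  then obtain x y where "a = (\<Sum>e\<in>S. x e)" "\<forall>e\<in>S. x e \<in> ga_ideal e"
    and "b = (\<Sum>e\<in>S. y e)" "\<forall>e\<in>S. y e \<in> ga_ideal e"
    by blast
  then show "a + b \<in> {\<Sum>e\<in>S. x e |x. \<forall>e\<in>S. x e \<in> ga_ideal e}"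
    by (intro CollectI exI[of _ "\<lambda>e. x e + y e"])
       (auto simp: sum.distrib intro!: ga.subspace_add[OF ga_subspace_ideal])
next
  fix c a assume "a \<in> {\<Sum>e\<in>S. x e |x. \<forall>e\<in>S. x e \<in> ga_ideal e}"
  then obtain x where "a = (\<Sum>e\<in>S. x e)" "\<forall>e\<in>S. x e \<in> ga_ideal e" by blast
  then show "ga_scale c a \<in> {\<Sum>e\<in>S. x e |x. \<forall>e\<in>S. x e \<in> ga_ideal e}"
    by (intro CollectI exI[of _ "\<lambda>e. ga_scale c (x e)"])
       (auto simp: ga.scale_sum_right intro: ga.subspace_scale[OF ga_subspace_ideal])
qed

lemma ga_ideal_sum_insert:
  fixes S :: "('g::{ab_group_add,finite} \<Rightarrow> 'f::field) set"
  assumes "finite S" "e \<notin> S"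
  shows "ga_ideal_sum (insert e S) = {x + y |x y. x \<in> ga_ideal e \<and> y \<in> ga_ideal_sum S}"
proof (intro subset_antisym subsetI)
  fix z assume "z \<in> ga_ideal_sum (insert e S)"
  then obtain x where "z = (\<Sum>f\<in>insert e S. x f)" "\<forall>f\<in>insert e S. x f \<in> ga_ideal f"
    unfolding ga_ideal_sum_def by blast
  then show "z \<in> {x + y |x y. x \<in> ga_ideal e \<and> y \<in> ga_ideal_sum S}"
    using assms unfolding ga_ideal_sum_def by auto
next
  fix z assume "z \<in> {x + y |x y. x \<in> ga_ideal e \<and> y \<in> ga_ideal_sum S}"
  then obtain a x where z: "z = a + (\<Sum>f\<in>S. x f)" and "a \<in> ga_ideal e" "\<forall>f\<in>S. x f \<in> ga_ideal f"
    unfolding ga_ideal_sum_def by blast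
  moreover have "(\<Sum>f\<in>insert e S. (x(e := a)) f) = a + (\<Sum>f\<in>S. x f)"
    using assms by (simp add: sum.insert) (intro sum.cong, auto)
  ultimately show "z \<in> ga_ideal_sum (insert e S)"
    unfolding ga_ideal_sum_def by (intro CollectI exI[of _ "x(e := a)"]) auto
qed

lemma ga_dim_ideal_sum:
  fixes S :: "('g::{ab_group_add,finite} \<Rightarrow> 'f::field) set"
  assumes "finite S" and idem: "\<And>e. e \<in> S \<Longrightarrow> ga_idempotent e"
    and orth: "\<And>e f. e \<in> S \<Longrightarrow> f \<in> S \<Longrightarrow> e \<noteq> f \<Longrightarrow> ga_mult e f = 0"
  shows "ga_dim (ga_ideal_sum S) = (\<Sum>e\<in>S. ga_dim (ga_ideal e))"
  using assms
proof (induction S rule: finite_induct)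
  case empty
  have "ga_ideal_sum {} = {0 :: 'g \<Rightarrow> 'f}" by (simp add: ga_ideal_sum_def)
  then show ?case by (simp add: ga_dim_def)
next
  case (insert e S)
  have e: "ga_idempotent e" using insert.prems(1) by blast
  have "ga_ideal e \<inter> ga_ideal_sum S \<subseteq> {0}"
  proof
    fix z assume z: "z \<in> ga_ideal e \<inter> ga_ideal_sum S"
    then obtain x where x: "z = (\<Sum>f\<in>S. x f)" "\<forall>f\<in>S. x f \<in> ga_ideal f"
      unfolding ga_ideal_sum_def by blast
    have "ga_mult (x f) e = 0" if "f \<in> S" for f
    proof -
      have "x f \<in> ga_ideal f" using x(2) that by blast
      then obtain w where "x f = ga_mult w f" unfolding ga_ideal_def by blast
      moreover have "f \<noteq> e" using insert.hyps(2) that by blast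
      then have "ga_mult f e = 0" using insert.prems(2) that by blast
      ultimately show ?thesis by (simp add: ga_mult.assoc)
    qed
    then have "ga_mult z e = 0" unfolding x(1) ga_mult_sum_left by simp
    moreover have "ga_mult z e = z" using z e ga_ideal_idempotent_iff by blast
    ultimately show "z \<in> {0}" by simp
  qed
  then have "ga.dim (ga_ideal e \<inter> ga_ideal_sum S) = 0"
    using ga.dim_eq_0 by blast
  then have "ga_dim (ga_ideal_sum (insert e S)) = ga_dim (ga_ideal e) + ga_dim (ga_ideal_sum S)"
    using ga.dim_sums_Int[OF ga_subspace_ideal ga_subspace_ideal_sum, of e S]
    unfolding ga_ideal_sum_insert[OF insert.hyps] ga_dim_def by linarith
  moreover have "ga_dim (ga_ideal_sum S) = (\<Sum>f\<in>S. ga_dim (ga_ideal f))"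
    using insert.IH insert.prems by blast
  ultimately show ?case using insert.hyps by simp
qed

section \<open>Primitive idempotents and \<open>\<mu>\<close>\<close>

lemma ex_primitive_idempotent_below:
  fixes u :: "'g::{ab_group_add,finite} \<Rightarrow> 'f::field"
  assumes "ga_idempotent u" "u \<noteq> 0"
  shows "\<exists>e. ga_primitive_idempotent e \<and> ga_mult e u = e"
  using assms
proof (induction "ga_dim (ga_ideal u)" arbitrary: u rule: less_induct)
  case less
  show ?case
  proof (cases "ga_primitive_idempotent u")
    case True
    then show ?thesis using less.prems unfolding ga_idempotent_def by blast
  next
    case False
    then obtain e1 e2 where idem: "ga_mult e1 e1 = e1" "ga_mult e2 e2 = e2"
      and nz: "e1 \<noteq> 0" "e2 \<noteq> 0" and orth: "ga_mult e1 e2 = 0" and u: "u = e1 + e2"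
      using less.prems unfolding ga_primitive_idempotent_def ga_idempotent_def by blast
    have e1u: "ga_mult e1 u = e1" and e2u: "ga_mult e2 u = e2"
      unfolding u ga_mult_add_right idem orth ga_mult.commute[of e2 e1] by simp_all
    have "e2 \<in> ga_ideal u" "e2 \<notin> ga_ideal e1"
      using less.prems(1) idem e2u nz orth
      by (simp_all add: ga_ideal_idempotent_iff ga_idempotent_def ga_mult.commute[of e2 e1])
    then have "ga_ideal e1 \<subset> ga_ideal u"
      using ga_ideal_subsetI[OF e1u] by blast
    moreover have span_ideal: "ga.span (ga_ideal a) = ga_ideal a" for a :: "'g \<Rightarrow> 'f"
      by (rule ga.span_eq_iff[THEN iffD2, OF ga_subspace_ideal])
    ultimately have "ga_dim (ga_ideal e1) < ga_dim (ga_ideal u)"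
      unfolding ga_dim_def by (intro ga.dim_psubset) (simp only: span_ideal)
    then obtain e where e: "ga_primitive_idempotent e" "ga_mult e e1 = e"
      using less.hyps idem nz unfolding ga_idempotent_def by blast
    have "ga_mult e u = ga_mult (ga_mult e e1) u" using e(2) by simp
    also have "\<dots> = ga_mult e (ga_mult e1 u)" by (rule ga_mult.assoc)
    also have "\<dots> = e" using e(2) e1u by simp
    finally show ?thesis using e(1) by blast
  qed
qed

lemma finite_primitive_ideal_dims:
  "finite {ga_dim (ga_ideal (e :: 'g::{ab_group_add,finite} \<Rightarrow> 'f::field)) |e.
    ga_primitive_idempotent e \<and> e \<noteq> ga_e0}"
  by (rule finite_subset[of _ "{..card (UNIV :: 'g set)}"]) (auto simp: ga_dim_le_card)

lemma mu_q_le: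
  fixes e :: "'g::{ab_group_add,finite} \<Rightarrow> 'f::field"
  assumes "ga_primitive_idempotent e" "e \<noteq> ga_e0"
  shows "mu_q TYPE('g) TYPE('f) \<le> ga_dim (ga_ideal e)"
  unfolding mu_q_def using finite_primitive_ideal_dims assms by (intro Min_le) blast+

context
  assumes order_nonzero: "of_nat (card (UNIV :: 'g::{ab_group_add,finite} set)) \<noteq> (0::'f::field)"
    and order_gt_1: "1 < card (UNIV :: 'g set)"
begin

lemma ex_primitive_idempotent_ne_e0: "\<exists>e :: 'g \<Rightarrow> 'f. ga_primitive_idempotent e \<and> e \<noteq> ga_e0"
proof -
  define u :: "'g \<Rightarrow> 'f" where "u = ga_of 0 - ga_e0"
  have e0: "ga_mult ga_e0 ga_e0 = (ga_e0 :: 'g \<Rightarrow> 'f)" "(ga_e0 :: 'g \<Rightarrow> 'f) \<noteq> 0"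
    using e0_idempotent e0_nonzero order_nonzero by blast+
  have u_e0: "ga_mult u ga_e0 = 0"
    unfolding u_def ga_mult_diff_left e0 by simp
  have "ga_idempotent u"
    unfolding ga_idempotent_def u_def ga_mult_diff_left ga_mult_diff_right e0 by simp
  moreover have "u \<noteq> 0"
  proof
    assume "u = 0"
    have "UNIV \<noteq> {0 :: 'g}"
    proof
      assume "UNIV = {0 :: 'g}"
      then have "card (UNIV :: 'g set) = card {0 :: 'g}" by (rule arg_cong)
      with order_gt_1 show False by simp
    qed
    then obtain g :: 'g where "g \<noteq> 0" by blast
    then have "u g \<noteq> 0" using order_nonzero by (simp add: u_def ga_of_def ga_e0_def)
    with \<open>u = 0\<close> show False by simp
  qed
  ultimately obtain e where e: "ga_primitive_idempotent e" "ga_mult e u = e"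
    using ex_primitive_idempotent_below by blast
  have "ga_mult e ga_e0 = ga_mult (ga_mult e u) ga_e0" using e(2) by simp
  also have "\<dots> = 0" by (simp only: ga_mult.assoc u_e0 ga_mult_zero_right)
  finally show ?thesis using e(1) e0 by auto
qed

lemma mu_q_pos: "0 < mu_q TYPE('g::{ab_group_add,finite}) TYPE('f::field)"
proof -
  have "mu_q TYPE('g) TYPE('f) \<in> {ga_dim (ga_ideal (e :: 'g \<Rightarrow> 'f)) |e. ga_primitive_idempotent e \<and> e \<noteq> ga_e0}"
    unfolding mu_q_def using finite_primitive_ideal_dims ex_primitive_idempotent_ne_e0 by (intro Min_in) blast+
  then show ?thesis
    using ga_dim_ideal_pos primitive_idempotentD unfolding ga_idempotent_def by fastforce
qed

end

section \<open>The involution \<open>\<tau>\<close>\<close>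

text \<open>The library proves this as \<open>finite_field_power_card_eq_same\<close>, but only for the sort
  \<open>finite_field\<close>, which a type variable of sort \<open>{field, finite}\<close> does not have.\<close>

lemma power_card_UNIV_eq_self:
  fixes x :: "'a::{field,finite}"
  shows "x ^ card (UNIV :: 'a set) = x"
proof (cases "x = 0")
  case False
  define N where "N = UNIV - {0 :: 'a}"
  have "bij_betw ((*) x) N N"
    unfolding N_def using False
    by (intro bij_betw_byWitness[where f' = "\<lambda>y. y / x"]) auto
  then have "(\<Prod>y\<in>N. x * y) = \<Prod>N"
    by (rule prod.reindex_bij_betw)
  then have "x ^ card N * \<Prod>N = 1 * \<Prod>N"
    by (simp add: prod.distrib)
  moreover have "\<Prod>N \<noteq> 0"
    unfolding N_def by simp
  ultimately have "x ^ card N = 1"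
    by (rule mult_right_cancel[THEN iffD1, rotated])
  moreover have "card (UNIV :: 'a set) = Suc (card N)"
    unfolding N_def by (simp add: card_Diff_singleton Suc_diff_1 finite_UNIV_card_ge_0)
  ultimately show ?thesis by simp
qed (simp add: finite_UNIV_card_ge_0)

lemma CHAR_eq_if_card_eq_prime_power:
  assumes "prime p" and card: "card (UNIV :: 'f::{field,finite} set) = p ^ k"
  shows "CHAR('f) = p"
proof -
  have char_prime: "prime CHAR('f)" by (rule prime_CHAR_semidom) (simp add: finite_imp_CHAR_pos)
  moreover have "CHAR('f) dvd p ^ k" using CHAR_dvd_CARD[where 'a = 'f] card by simp
  ultimately have "CHAR('f) dvd p" using prime_dvd_power by blast
  then show ?thesis using char_prime assms(1) by (simp add: primes_dvd_imp_eq)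
qed

locale frobenius_involution =
  fixes field_type :: "'f::field itself" and q :: nat
  assumes q_pos: "0 < q"
    and power_q_add: "\<And>x y :: 'f. (x + y) ^ q = x ^ q + y ^ q"
    and power_q_power_q: "\<And>x :: 'f. (x ^ q) ^ q = x"

lemma frobenius_involution_if_card_eq:
  assumes "prime p" "0 < k" and card: "card (UNIV :: 'f::{field,finite} set) = (p ^ k) ^ 2"
  shows "frobenius_involution TYPE('f) (p ^ k)"
proof
  have "CHAR('f) = p"
    using CHAR_eq_if_card_eq_prime_power[OF \<open>prime p\<close>] card by (simp add: power_mult[symmetric])
  then show "(x + y) ^ p ^ k = x ^ p ^ k + y ^ p ^ k" for x y :: 'f
    using \<open>prime p\<close> by (intro freshmans_dream') simp_all
  show "(x ^ p ^ k) ^ p ^ k = x" for x :: 'f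
    using power_card_UNIV_eq_self[of x] card by (simp add: power_mult[symmetric] power2_eq_square)
qed (use \<open>prime p\<close> in \<open>simp add: prime_gt_0_nat\<close>)

context frobenius_involution
begin

lemma power_q_sum: "(\<Sum>i\<in>I. a i :: 'f) ^ q = (\<Sum>i\<in>I. a i ^ q)"
proof (induction I rule: infinite_finite_induct)
  case (insert i I)
  then show ?case by (simp add: power_q_add)
qed (use q_pos in auto)

lemma of_nat_power_q: "(of_nat m :: 'f) ^ q = of_nat m"
proof (induction m)
  case (Suc m)
  then show ?case by (simp add: power_q_add)
qed (use q_pos in auto)

context
  fixes a b :: "'g::{ab_group_add,finite} \<Rightarrow> 'f"
begin

lemma tau_add: "ga_tau q (a + b) = ga_tau q a + ga_tau q b"
  by (simp add: ga_tau_def fun_eq_iff power_q_add)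

lemma tau_tau [simp]: "ga_tau q (ga_tau q a) = a"
  by (simp add: ga_tau_def fun_eq_iff power_q_power_q)

lemma tau_zero: "ga_tau q (0 :: 'g \<Rightarrow> 'f) = 0"
  using q_pos by (simp add: ga_tau_def fun_eq_iff)

lemma tau_eq_0_iff [simp]: "ga_tau q a = 0 \<longleftrightarrow> a = 0"
  by (metis tau_tau tau_zero)

lemma tau_mult: "ga_tau q (ga_mult a b) = ga_mult (ga_tau q a) (ga_tau q b)"
proof
  fix g
  have "ga_tau q (ga_mult a b) g = (\<Sum>h\<in>UNIV. a h ^ q * b (- g - h) ^ q)"
    by (simp add: ga_tau_def ga_mult_def power_q_sum power_mult_distrib)
  also have "\<dots> = (\<Sum>h\<in>UNIV. a (- h) ^ q * b (- (g - h)) ^ q)"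
    by (rule sum.reindex_bij_witness[where i = uminus and j = uminus]) auto
  also have "\<dots> = ga_mult (ga_tau q a) (ga_tau q b) g"
    by (simp add: ga_tau_def ga_mult_def)
  finally show "ga_tau q (ga_mult a b) g = ga_mult (ga_tau q a) (ga_tau q b) g" .
qed

end

lemma tau_idempotent:
  "ga_idempotent (e :: 'g::{ab_group_add,finite} \<Rightarrow> 'f) \<Longrightarrow> ga_idempotent (ga_tau q e)"
  unfolding ga_idempotent_def tau_mult[symmetric] by simp

lemma tau_primitive_idempotent:
  assumes "ga_primitive_idempotent (e :: 'g::{ab_group_add,finite} \<Rightarrow> 'f)"
  shows "ga_primitive_idempotent (ga_tau q e)"
  unfolding ga_primitive_idempotent_def
proof (intro conjI notI)
  show "ga_tau q e = 0 \<Longrightarrow> False" using assms by (simp add: ga_primitive_idempotent_def)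
  show "ga_idempotent (ga_tau q e)" using assms tau_idempotent ga_primitive_idempotent_def by blast
  assume "\<exists>e1 e2. ga_idempotent e1 \<and> ga_idempotent e2 \<and> e1 \<noteq> 0 \<and> e2 \<noteq> 0 \<and>
    ga_mult e1 e2 = 0 \<and> ga_tau q e = e1 + e2"
  then obtain e1 e2 where "ga_idempotent e1" "ga_idempotent e2" "e1 \<noteq> 0" "e2 \<noteq> 0"
    and "ga_mult e1 e2 = 0" and sum: "ga_tau q e = e1 + e2"
    by blast
  \<comment> \<open>applying \<open>\<tau>\<close> once more decomposes \<open>e\<close> itself\<close>
  moreover have "e = ga_tau q e1 + ga_tau q e2"
    using sum by (metis tau_tau tau_add)
  ultimately have "ga_idempotent (ga_tau q e1)" "ga_idempotent (ga_tau q e2)"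
    "ga_tau q e1 \<noteq> 0" "ga_tau q e2 \<noteq> 0"
    "ga_mult (ga_tau q e1) (ga_tau q e2) = 0" "e = ga_tau q e1 + ga_tau q e2"
    by (simp_all add: tau_idempotent flip: tau_mult)
  then show False using assms unfolding ga_primitive_idempotent_def by blast
qed

lemma tau_e0: "ga_tau q (ga_e0 :: 'g::{ab_group_add,finite} \<Rightarrow> 'f) = ga_e0"
  by (simp add: ga_tau_def ga_e0_def fun_eq_iff power_inverse of_nat_power_q)

definition tau_orbit_sum :: "('g::{ab_group_add,finite} \<Rightarrow> 'f) \<Rightarrow> ('g \<Rightarrow> 'f)" where
  "tau_orbit_sum e = (if ga_tau q e = e then e else e + ga_tau q e)"

lemma Ehat_dagger_eq_image:
  "Ehat_dagger q =
     tau_orbit_sum ` {e :: 'g::{ab_group_add,finite} \<Rightarrow> 'f. ga_primitive_idempotent e \<and> e \<noteq> ga_e0}"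
  unfolding Ehat_dagger_def tau_orbit_sum_def using tau_e0 by (auto simp: image_def)

lemma tau_orbit_sum_tau: "tau_orbit_sum (ga_tau q e) = tau_orbit_sum (e :: 'g::{ab_group_add,finite} \<Rightarrow> 'f)"
  unfolding tau_orbit_sum_def by (auto simp: add.commute)

lemma tau_orbit_sums_orthogonal:
  fixes e f :: "'g::{ab_group_add,finite} \<Rightarrow> 'f"
  assumes e: "ga_primitive_idempotent e" and f: "ga_primitive_idempotent f"
    and ne: "tau_orbit_sum e \<noteq> tau_orbit_sum f"
  shows "ga_mult (tau_orbit_sum e) (tau_orbit_sum f) = 0"
proof -
  \<comment> \<open>the \<open>\<tau>\<close>-orbits of \<open>e\<close> and \<open>f\<close> are disjoint\<close>
  have "f \<noteq> e" "f \<noteq> ga_tau q e" "ga_tau q f \<noteq> e" "ga_tau q f \<noteq> ga_tau q e"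
    using ne tau_orbit_sum_tau[of e] tau_orbit_sum_tau[of f] by (metis tau_tau)+
  then have "ga_mult e f = 0" "ga_mult (ga_tau q e) f = 0"
    "ga_mult e (ga_tau q f) = 0" "ga_mult (ga_tau q e) (ga_tau q f) = 0"
    using primitive_idempotents_orthogonal e f tau_primitive_idempotent by metis+
  then show ?thesis
    unfolding tau_orbit_sum_def by (simp add: ga_mult_add_left ga_mult_add_right)
qed

lemma tau_orbit_sum_idempotent:
  fixes e :: "'g::{ab_group_add,finite} \<Rightarrow> 'f"
  assumes order_nonzero: "of_nat (card (UNIV :: 'g set)) \<noteq> (0::'f)"
    and e: "ga_primitive_idempotent e" "e \<noteq> ga_e0"
  shows "ga_idempotent (tau_orbit_sum e)" "ga_mult (tau_orbit_sum e) ga_e0 = 0"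
    "ga_ideal e \<subseteq> ga_ideal (tau_orbit_sum e)"
proof -
  let ?t = "ga_tau q e"
  have t: "ga_primitive_idempotent ?t" "?t \<noteq> ga_e0"
    using tau_primitive_idempotent[OF e(1)] e(2) tau_e0 tau_tau by metis+
  have e0: "ga_mult e ga_e0 = 0" "ga_mult ?t ga_e0 = 0"
    using primitive_idempotents_orthogonal e0_primitive[OF order_nonzero] e t by blast+
  have ee: "ga_mult e e = e" and tt: "ga_mult ?t ?t = ?t"
    using primitive_idempotentD e(1) t(1) by blast+
  have "?t \<noteq> e \<Longrightarrow> ga_mult e ?t = 0"
    using primitive_idempotents_orthogonal e(1) t(1) by metis
  then have "ga_mult (tau_orbit_sum e) (tau_orbit_sum e) = tau_orbit_sum e"
    and "ga_mult e (tau_orbit_sum e) = e"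
    unfolding tau_orbit_sum_def
    by (simp_all add: ga_mult_add_left ga_mult_add_right ee tt ga_mult.commute[of ?t e])
  then show "ga_idempotent (tau_orbit_sum e)" "ga_ideal e \<subseteq> ga_ideal (tau_orbit_sum e)"
    unfolding ga_idempotent_def by (simp_all add: ga_ideal_subsetI)
  show "ga_mult (tau_orbit_sum e) ga_e0 = 0"
    unfolding tau_orbit_sum_def by (simp add: ga_mult_add_left e0)
qed

end

section \<open>Counting \<open>\<Omega>\<^sub>\<ell>\<close>\<close>

lemma card_nonempty_subsets_card_le:
  assumes "finite E"
  shows "card {S. S \<subseteq> E \<and> S \<noteq> {} \<and> card S \<le> K} \<le> (card E + 1) ^ K - 1"
proof -
  have "{S. S \<subseteq> E \<and> S \<noteq> {} \<and> card S \<le> K} \<subseteq> (\<Union>k\<in>{1..K}. {S. S \<subseteq> E \<and> card S = k})"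
    using assms by (auto simp: Suc_le_eq card_gt_0_iff dest: finite_subset)
  then have "card {S. S \<subseteq> E \<and> S \<noteq> {} \<and> card S \<le> K}
      \<le> card (\<Union>k\<in>{1..K}. {S. S \<subseteq> E \<and> card S = k})"
    by (intro card_mono) (use assms in auto)
  also have "\<dots> \<le> (\<Sum>k=1..K. card {S. S \<subseteq> E \<and> card S = k})"
    by (rule card_UN_le) simp
  also have "\<dots> = (\<Sum>k=1..K. card E choose k)"
    using n_subsets[OF assms] by simp
  also have "\<dots> \<le> (\<Sum>k=1..K. (K choose k) * card E ^ k)"
  proof (rule sum_mono)
    fix k assume "k \<in> {1..K}"
    then have "1 \<le> K choose k" by (simp add: Suc_leI)
    moreover have "card E choose k \<le> card E ^ k"
      by (cases "k \<le> card E") (simp_all add: binomial_le_pow binomial_eq_0)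
    ultimately show "card E choose k \<le> (K choose k) * card E ^ k"
      by (metis le_trans mult_1 mult_le_mono1)
  qed
  also have "\<dots> = (card E + 1) ^ K - 1"
  proof -
    have "(card E + 1) ^ K = (\<Sum>k\<le>K. (K choose k) * card E ^ k)"
      using binomial[of "card E" 1 K] by (simp add: mult.commute)
    also have "\<dots> = 1 + (\<Sum>k=1..K. (K choose k) * card E ^ k)"
      by (simp add: atMost_atLeast0 sum.atLeast_Suc_atMost)
    finally show ?thesis by simp
  qed
  finally show ?thesis .
qed

context frobenius_involution
begin

context
  assumes order_nonzero: "of_nat (card (UNIV :: 'g::{ab_group_add,finite} set)) \<noteq> (0::'f)"
begin

lemma Ehat_dagger_idempotent:
  assumes "(s :: 'g \<Rightarrow> 'f) \<in> Ehat_dagger q"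
  shows "ga_idempotent s" "ga_mult s ga_e0 = 0" "mu_q TYPE('g) TYPE('f) \<le> ga_dim (ga_ideal s)"
proof -
  obtain e where e: "ga_primitive_idempotent e" "e \<noteq> ga_e0" and s: "s = tau_orbit_sum e"
    using assms unfolding Ehat_dagger_eq_image by blast
  show "ga_idempotent s" "ga_mult s ga_e0 = 0"
    unfolding s using tau_orbit_sum_idempotent[OF order_nonzero e] by blast+
  have "mu_q TYPE('g) TYPE('f) \<le> ga_dim (ga_ideal e)"
    by (rule mu_q_le[OF e])
  also have "\<dots> \<le> ga_dim (ga_ideal s)"
    unfolding s by (intro ga_dim_mono tau_orbit_sum_idempotent[OF order_nonzero e])
  finally show "mu_q TYPE('g) TYPE('f) \<le> ga_dim (ga_ideal s)" .
qed

lemma Ehat_dagger_orthogonal: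
  assumes "(s :: 'g \<Rightarrow> 'f) \<in> Ehat_dagger q" "t \<in> Ehat_dagger q" "s \<noteq> t"
  shows "ga_mult s t = 0"
  using assms tau_orbit_sums_orthogonal unfolding Ehat_dagger_eq_image by blast

lemma ga_dim_ideal_sum_insert_e0_Ehat_dagger:
  assumes "S \<subseteq> insert ga_e0 (Ehat_dagger q :: ('g \<Rightarrow> 'f) set)" "finite S"
  shows "ga_dim (ga_ideal_sum S) = (\<Sum>s\<in>S. ga_dim (ga_ideal s))"
proof (rule ga_dim_ideal_sum[OF assms(2)])
  have e0: "ga_idempotent (ga_e0 :: 'g \<Rightarrow> 'f)"
    using e0_idempotent[OF order_nonzero] unfolding ga_idempotent_def .
  show "ga_idempotent s" if "s \<in> S" for s
    using that assms(1) e0 Ehat_dagger_idempotent(1) by blast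
  have e0_orth: "ga_mult s ga_e0 = 0" "ga_mult ga_e0 s = 0" if "s \<in> Ehat_dagger q" for s :: "'g \<Rightarrow> 'f"
    using Ehat_dagger_idempotent(2)[OF that] ga_mult.commute[of s] by simp_all
  show "ga_mult s t = 0" if "s \<in> S" "t \<in> S" "s \<noteq> t" for s t
  proof -
    have "s \<in> insert ga_e0 (Ehat_dagger q)" "t \<in> insert ga_e0 (Ehat_dagger q)"
      using that(1,2) assms(1) by blast+
    then show ?thesis
      using \<open>s \<noteq> t\<close> by (elim insertE) (simp_all add: e0_orth Ehat_dagger_orthogonal)
  qed
qed

lemma card_mult_mu_q_le_ga_dim:
  assumes "S \<subseteq> (Ehat_dagger q :: ('g \<Rightarrow> 'f) set)" "finite S"
  shows "card S * mu_q TYPE('g) TYPE('f) \<le> ga_dim (ga_ideal_sum S)"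
proof -
  have "card S * mu_q TYPE('g) TYPE('f) \<le> (\<Sum>s\<in>S. ga_dim (ga_ideal s))"
    using sum_bounded_below[of S "mu_q TYPE('g) TYPE('f)" "\<lambda>s. ga_dim (ga_ideal s)"]
      assms(1) Ehat_dagger_idempotent(3) by auto
  also have "\<dots> = ga_dim (ga_ideal_sum S)"
    using assms by (intro ga_dim_ideal_sum_insert_e0_Ehat_dagger[symmetric]) blast+
  finally show ?thesis .
qed

context
  assumes order_gt_1: "1 < card (UNIV :: 'g set)"
begin

lemma card_subset_Ehat_dagger_less:
  assumes S: "S \<subseteq> (Ehat_dagger q :: ('g \<Rightarrow> 'f) set)" "finite S"
  shows "card S < card (UNIV :: 'g set)"
proof -
  have e0: "ga_mult ga_e0 ga_e0 = (ga_e0 :: 'g \<Rightarrow> 'f)" "(ga_e0 :: 'g \<Rightarrow> 'f) \<noteq> 0"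
    using e0_idempotent e0_nonzero order_nonzero by blast+
  have "card S \<le> card S * mu_q TYPE('g) TYPE('f)"
    using mu_q_pos[OF order_nonzero order_gt_1] by simp
  also have "\<dots> \<le> ga_dim (ga_ideal_sum S)"
    by (rule card_mult_mu_q_le_ga_dim[OF S])
  \<comment> \<open>\<open>e\<^sub>0 \<notin> S\<close> contributes a further nonzero summand\<close>
  also have "\<dots> < ga_dim (ga_ideal (ga_e0 :: 'g \<Rightarrow> 'f)) + ga_dim (ga_ideal_sum S)"
    using ga_dim_ideal_pos e0 unfolding ga_idempotent_def by simp
  also have "\<dots> = ga_dim (ga_ideal_sum (insert ga_e0 S))"
  proof -
    have "ga_e0 \<notin> S"
      using S Ehat_dagger_idempotent(2) e0 by fastforce
    moreover have "insert ga_e0 S \<subseteq> insert ga_e0 (Ehat_dagger q)" "S \<subseteq> insert ga_e0 (Ehat_dagger q)"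
      using S(1) by blast+
    ultimately show ?thesis
      using ga_dim_ideal_sum_insert_e0_Ehat_dagger S(2) by simp
  qed
  also have "\<dots> \<le> card (UNIV :: 'g set)"
    by (rule ga_dim_le_card)
  finally show ?thesis .
qed

lemma finite_Ehat_dagger: "finite (Ehat_dagger q :: ('g \<Rightarrow> 'f) set)"
  and card_Ehat_dagger_less: "card (Ehat_dagger q :: ('g \<Rightarrow> 'f) set) < card (UNIV :: 'g set)"
proof -
  have "finite (Ehat_dagger q :: ('g \<Rightarrow> 'f) set) \<and> card (Ehat_dagger q :: ('g \<Rightarrow> 'f) set) \<le> card (UNIV :: 'g set) - 1"
  proof (rule finite_if_finite_subsets_card_bdd)
    show "card S \<le> card (UNIV :: 'g set) - 1" if "S \<subseteq> Ehat_dagger q" "finite S" for S :: "('g \<Rightarrow> 'f) set"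
      using card_subset_Ehat_dagger_less[OF that] by linarith
  qed
  then show "finite (Ehat_dagger q :: ('g \<Rightarrow> 'f) set)" "card (Ehat_dagger q :: ('g \<Rightarrow> 'f) set) < card (UNIV :: 'g set)"
    using order_gt_1 by linarith+
qed

lemma Omega_subset_image:
  assumes "mu_q TYPE('g) TYPE('f) \<le> l"
  shows "(Omega q l :: ('g \<Rightarrow> 'f) set set)
    \<subseteq> ga_ideal_sum ` {S. S \<subseteq> Ehat_dagger q \<and> S \<noteq> {} \<and> card S \<le> l div mu_q TYPE('g) TYPE('f)}"
proof
  let ?mu = "mu_q TYPE('g) TYPE('f)"
  have mu_pos: "0 < ?mu" using mu_q_pos[OF order_nonzero order_gt_1] .
  fix J assume "J \<in> (Omega q l :: ('g \<Rightarrow> 'f) set set)"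
  then obtain S where S: "S \<subseteq> Ehat_dagger q" and J: "J = ga_ideal_sum S" "ga_dim J = l"
    unfolding Omega_def by blast
  have "card S * ?mu \<le> l"
    using card_mult_mu_q_le_ga_dim[OF S] finite_Ehat_dagger S J by (auto dest: finite_subset)
  then have "card S \<le> l div ?mu"
    using mu_pos by (simp add: less_eq_div_iff_mult_less_eq)
  moreover have "S \<noteq> {}"
    using J assms mu_pos by (auto simp: ga_ideal_sum_def ga_dim_def)
  ultimately show "J \<in> ga_ideal_sum ` {S. S \<subseteq> Ehat_dagger q \<and> S \<noteq> {} \<and> card S \<le> l div ?mu}"
    using S J by blast
qed

lemma card_Omega_less_powr:
  assumes "mu_q TYPE('g) TYPE('f) \<le> l"
  shows "real (card (Omega q l :: ('g \<Rightarrow> 'f) set set))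
    < real (card (UNIV :: 'g set)) powr (real l / real (mu_q TYPE('g) TYPE('f)))"
proof -
  let ?n = "card (UNIV :: 'g set)" and ?K = "l div mu_q TYPE('g) TYPE('f)"
    and ?E = "Ehat_dagger q :: ('g \<Rightarrow> 'f) set"
  have "card (Omega q l :: ('g \<Rightarrow> 'f) set set) \<le> card (ga_ideal_sum ` {S. S \<subseteq> ?E \<and> S \<noteq> {} \<and> card S \<le> ?K})"
    by (intro card_mono finite_imageI Omega_subset_image assms) (use finite_Ehat_dagger in simp)
  also have "\<dots> \<le> card {S. S \<subseteq> ?E \<and> S \<noteq> {} \<and> card S \<le> ?K}"
    by (rule card_image_le) (use finite_Ehat_dagger in simp)
  also have "\<dots> \<le> (card ?E + 1) ^ ?K - 1"
    by (rule card_nonempty_subsets_card_le[OF finite_Ehat_dagger])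
  also have "\<dots> < ?n ^ ?K"
  proof -
    have "(card ?E + 1) ^ ?K \<le> ?n ^ ?K"
      using card_Ehat_dagger_less by (intro power_mono) simp_all
    moreover have "0 < ?n ^ ?K" using order_gt_1 by simp
    ultimately show ?thesis by linarith
  qed
  finally have "real (card (Omega q l :: ('g \<Rightarrow> 'f) set set)) < real ?n powr real ?K"
    using order_gt_1 by (simp add: powr_realpow flip: of_nat_power)
  also have "\<dots> \<le> real ?n powr (real l / real (mu_q TYPE('g) TYPE('f)))"
    using order_gt_1 by (intro powr_mono) (simp_all add: of_nat_div_le_of_nat)
  finally show ?thesis .
qed

end

end

end

theorem lemma3p12:
  fixes q :: nat and l :: nat
  assumes "\<exists>p k. prime p \<and> k > 0 \<and> q = p ^ k"
    and "card (UNIV :: ('f::{field,finite}) set) = q ^ 2"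
    and "odd (card (UNIV :: ('g::{ab_group_add,finite}) set))"
    and "card (UNIV :: 'g set) > 1"
    and "coprime (card (UNIV :: 'g set)) q"
    and "mu_q TYPE('g) TYPE('f) \<le> l" and "l < card (UNIV :: 'g set)"
  shows "real (card (Omega q l :: ('g \<Rightarrow> 'f) set set))
           < real (card (UNIV :: 'g set)) powr (real l / real (mu_q TYPE('g) TYPE('f)))"
proof -
  obtain p k where p: "prime p" "0 < k" "q = p ^ k"
    using assms(1) by blast
  interpret frobenius_involution "TYPE('f)" q
    using frobenius_involution_if_card_eq[OF p(1,2)] assms(2) p(3) by simp
  have "CHAR('f) = p"
    using CHAR_eq_if_card_eq_prime_power[OF p(1)] assms(2) p(3) by (simp flip: power_mult)
  moreover have "\<not> p dvd card (UNIV :: 'g set)"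
  proof
    assume "p dvd card (UNIV :: 'g set)"
    then have "is_unit p"
      using assms(5) p by (intro coprime_common_divisor[of _ q]) (simp_all add: dvd_power)
    then show False
      using p(1) not_prime_unit by blast
  qed
  ultimately have "of_nat (card (UNIV :: 'g set)) \<noteq> (0 :: 'f)"
    by (simp add: of_nat_eq_0_iff_char_dvd)
  then show ?thesis
    using card_Omega_less_powr assms(4,6) by blast
qed

end
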